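(* Let $I$ be an ideal of $\mathbb{S}_n$ ($n\ge1$). The following are equivalent: (1) $\mathbb{S}_n/I$ is left Noetherian; (2) $\mathbb{S}_n/I$ is right Noetherian; (3) $\mathbb{S}_n/I$ is commutative; (4) $\mathfrak a_n\subseteq I$, i.e. $I$ contains all the height one primes $\mathfrak p_1,\dots,\mathfrak p_n$ of $\mathbb{S}_n$.
   Context: $K$ is a field. $\mathbb{S}_n$ is the $K$-algebra generated by $x_1,\dots,x_n,y_1,\dots,y_n$ subject to the defining relations $y_ix_i=1$ for all $i$, and $[x_i,y_j]=[x_i,x_j]=[y_i,y_j]=0$ for all $i\ne j$. For each $i$, $\mathbb{S}_1(i)$ is the subalgebra generated by $x_i,y_i$, and $\mathbb{S}_n=\mathbb{S}_1(1)\otimes\cdots\otimes\mathbb{S}_1(n)$. $F(i)=\bigoplus_{k,l\in\mathbb N}K(x_i^ky_i^l-x_i^{k+1}y_i^{l+1})$ is an ideal of $\mathbb{S}_1(i)$. Define $\mathfrak p_i=\mathbb{S}_1(1)\otimes\cdots\otimes F(i)\otimes\cdots\otimes\mathbb{S}_1(n)$ ($F(i)$ in the $i$-th factor); these are exactly the height one primes of $\mathbb{S}_n$. Set $\mathfrak a_n=\mathfrak p_1+\cdots+\mathfrak p_n$, so that $\mathbb{S}_n/\mathfrak a_n\cong K[x_1^{\pm1},\dots,x_n^{\pm1}]$. *)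

theory Defs
  imports "HOL-Algebra.QuotRing"
begin

text \<open>S_1 = K<x,y | yx = 1> has the K-basis of normal words x^k y^l (k,l in nat).
  A basis word x^k y^l is encoded as the pair (k,l). Multiplication of basis words:
  x^a y^b * x^c y^d = x^(a + c - min b c) y^(b + d - min b c) (this is the bicyclic monoid).\<close>

definition bmul :: "nat \<times> nat \<Rightarrow> nat \<times> nat \<Rightarrow> nat \<times> nat" where
  "bmul p q = (fst p + fst q - min (snd p) (fst q), snd p + snd q - min (snd p) (fst q))"

text \<open>S_n = S_1(1) (x) ... (x) S_1(n). Its basis words are tuples of S_1-words; the
  tensor factors are indexed by 0,...,n-1 (factor i here is the paper's factor i+1).\<close>

type_synonym word = "nat \<Rightarrow> nat \<times> nat"

definition words :: "nat \<Rightarrow> word set" where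
  "words n = {m. \<forall>i\<ge>n. m i = (0, 0)}"

definition wmul :: "word \<Rightarrow> word \<Rightarrow> word" where
  "wmul m m' = (\<lambda>i. bmul (m i) (m' i))"

definition supp :: "(word \<Rightarrow> 'a::zero) \<Rightarrow> word set" where
  "supp f = {m. f m \<noteq> 0}"

definition Jacobson_alg :: "nat \<Rightarrow> (word \<Rightarrow> 'a::field) ring" where
  "Jacobson_alg n =
    \<lparr> carrier = {f. finite (supp f) \<and> supp f \<subseteq> words n},
      monoid.mult = (\<lambda>f g m. \<Sum>p\<in>{p \<in> supp f \<times> supp g. wmul (fst p) (snd p) = m}.
                                  f (fst p) * g (snd p)),
      one = (\<lambda>m. if m = (\<lambda>_. (0, 0)) then 1 else 0),
      zero = (\<lambda>_. 0),
      add = (\<lambda>f g m. f m + g m) \<rparr>"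

definition basis_elt :: "word \<Rightarrow> (word \<Rightarrow> 'a::field)" where
  "basis_elt m = (\<lambda>m'. if m' = m then 1 else 0)"

text \<open>p_i = S_1 (x) ... (x) F(i) (x) ... (x) S_1 is the K-span of the elements
  (basis word with i-th entry x_i^k y_i^l) - (same word with i-th entry x_i^(k+1) y_i^(l+1)),
  since F(i) is spanned by the x_i^k y_i^l - x_i^(k+1) y_i^(l+1).\<close>

definition p_gen :: "nat \<Rightarrow> word \<Rightarrow> (word \<Rightarrow> 'a::field)" where
  "p_gen i m = (\<lambda>m'. basis_elt m m' - basis_elt (m(i := (fst (m i) + 1, snd (m i) + 1))) m')"

inductive_set K_span :: "(word \<Rightarrow> 'a::field) set \<Rightarrow> (word \<Rightarrow> 'a) set" for G where
  zero: "(\<lambda>_. 0) \<in> K_span G"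
| step: "g \<in> G \<Longrightarrow> s \<in> K_span G \<Longrightarrow> (\<lambda>m. c * g m + s m) \<in> K_span G"

definition height_one_prime :: "nat \<Rightarrow> nat \<Rightarrow> (word \<Rightarrow> 'a::field) set" where
  "height_one_prime n i = K_span {p_gen i m | m. m \<in> words n}"

text \<open>a_n = p_1 + ... + p_n (sum of subspaces = span of the union).\<close>

definition frak_a :: "nat \<Rightarrow> (word \<Rightarrow> 'a::field) set" where
  "frak_a n = K_span (\<Union>i<n. {p_gen i m | m. m \<in> words n})"

definition left_ideal :: "'b set \<Rightarrow> ('b, 'c) ring_scheme \<Rightarrow> bool" where
  "left_ideal J R \<longleftrightarrow> additive_subgroup J R \<and>
     (\<forall>r\<in>carrier R. \<forall>a\<in>J. r \<otimes>\<^bsub>R\<^esub> a \<in> J)"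

definition right_ideal :: "'b set \<Rightarrow> ('b, 'c) ring_scheme \<Rightarrow> bool" where
  "right_ideal J R \<longleftrightarrow> additive_subgroup J R \<and>
     (\<forall>r\<in>carrier R. \<forall>a\<in>J. a \<otimes>\<^bsub>R\<^esub> r \<in> J)"

definition left_noetherian :: "('b, 'c) ring_scheme \<Rightarrow> bool" where
  "left_noetherian R \<longleftrightarrow> (\<forall>C :: nat \<Rightarrow> 'b set.
     (\<forall>k. left_ideal (C k) R) \<and> (\<forall>k. C k \<subseteq> C (Suc k)) \<longrightarrow> (\<exists>N. \<forall>k\<ge>N. C k = C N))"

definition right_noetherian :: "('b, 'c) ring_scheme \<Rightarrow> bool" where
  "right_noetherian R \<longleftrightarrow> (\<forall>C :: nat \<Rightarrow> 'b set.
     (\<forall>k. right_ideal (C k) R) \<and> (\<forall>k. C k \<subseteq> C (Suc k)) \<longrightarrow> (\<exists>N. \<forall>k\<ge>N. C k = C N))"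

definition ring_commutative :: "('b, 'c) ring_scheme \<Rightarrow> bool" where
  "ring_commutative R \<longleftrightarrow> (\<forall>a\<in>carrier R. \<forall>b\<in>carrier R. a \<otimes>\<^bsub>R\<^esub> b = b \<otimes>\<^bsub>R\<^esub> a)"

end

theory Submission
  imports Defs Complex_Main "HOL-Library.List_Lenlexorder"
begin

(* (3) <-> (4).  Modulo a_n every basis word of J equals its normal form, obtained by cancelling
   x_i y_i in every coordinate; the words u w and w u have the same normal form, so a_n contains
   all commutators and a_n <= I makes Q commutative.  Conversely, if Q is commutative then I
   contains y_i x_i - x_i y_i = 1 - x_i y_i, and every generator of p_i is a two-sided multiple
   of it.

   (1), (2) -> (4).  The elements e_k = x_i^k y_i^k form a decreasing chain of idempotents.  In a
   left (right) Noetherian ring such a chain has two equal consecutive members, since the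
   one-sided ideals generated by the 1 - e_k increase.  So e_N - e_(N+1) lies in I for some N,
   and again every generator of p_i is a two-sided multiple of this difference.

   (4) -> (1), (2).  Q is then commutative, so its one-sided ideals are ideals and it suffices
   to prove the ascending chain condition for ideals of J containing a_n.  Such an ideal D is
   determined by its part in K[x_1, ..., x_n], since a = (a x^v) y^v modulo a_n for v large;
   and increasing chains of subspaces of K[x_1, ..., x_n] that are stable under multiplication
   by monomials stabilise, by Dickson's lemma applied to their sets of leading exponents. *)

section \<open>Facts about arbitrary rings\<close>

lemma (in ring) one_minus_mult:
  assumes "p \<in> carrier R" "q \<in> carrier R"
  shows "(\<one> \<ominus> p) \<otimes> q = q \<ominus> p \<otimes> q" "q \<otimes> (\<one> \<ominus> p) = q \<ominus> q \<otimes> p"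
  using assms by (simp_all add: a_minus_def l_distr r_distr l_minus r_minus)

lemma (in ring) idempotent_complement:
  assumes "p \<in> carrier R" "p \<otimes> p = p"
  shows "(\<one> \<ominus> p) \<otimes> p = \<zero>" "p \<otimes> (\<one> \<ominus> p) = \<zero>"
  using assms by (simp_all add: one_minus_mult, simp_all add: a_minus_def r_neg)

lemma (in ring) split_by_product:
  assumes "a \<in> carrier R" "b \<in> carrier R" "c \<in> carrier R"
  shows "a = a \<otimes> (\<one> \<ominus> b \<otimes> c) \<oplus> (a \<otimes> b) \<otimes> c"
  using assms by (simp add: one_minus_mult m_assoc, algebra)

lemma (in ring) minus_eq_zero_iff:
  assumes "a \<in> carrier R" "b \<in> carrier R"
  shows "a \<ominus> b = \<zero> \<longleftrightarrow> a = b"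
  using assms by (metis a_minus_def add.inv_closed minus_equality r_neg)

lemma (in ring) commutator_step:
  assumes "a \<in> carrier R" "c \<in> carrier R" "g \<in> carrier R" "s \<in> carrier R" "a \<otimes> c = c \<otimes> a"
  shows "a \<otimes> (c \<otimes> g \<oplus> s) \<ominus> (c \<otimes> g \<oplus> s) \<otimes> a = c \<otimes> (a \<otimes> g \<ominus> g \<otimes> a) \<oplus> (a \<otimes> s \<ominus> s \<otimes> a)"
proof -
  have "a \<otimes> (c \<otimes> g) = c \<otimes> (a \<otimes> g)" using assms by (metis m_assoc)
  then have "a \<otimes> (c \<otimes> g \<oplus> s) \<ominus> (c \<otimes> g \<oplus> s) \<otimes> a
      = (c \<otimes> (a \<otimes> g) \<oplus> a \<otimes> s) \<ominus> (c \<otimes> (g \<otimes> a) \<oplus> s \<otimes> a)"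
    using assms by (simp add: r_distr l_distr m_assoc)
  also have "\<dots> = c \<otimes> (a \<otimes> g \<ominus> g \<otimes> a) \<oplus> (a \<otimes> s \<ominus> s \<otimes> a)"
    using assms by (simp add: a_minus_def r_distr r_minus, algebra)
  finally show ?thesis .
qed

lemma (in ring) mult_minus_mult:
  assumes "x \<in> carrier R" "a \<in> carrier R" "b \<in> carrier R" "y \<in> carrier R"
  shows "x \<otimes> (a \<ominus> b) \<otimes> y = x \<otimes> a \<otimes> y \<ominus> x \<otimes> b \<otimes> y"
  using assms by (simp add: a_minus_def r_distr l_distr r_minus l_minus)

lemma (in ring) minus_swap: "x \<in> carrier R \<Longrightarrow> y \<in> carrier R \<Longrightarrow> \<ominus> (x \<ominus> y) = y \<ominus> x"
  by algebra

lemma (in ring) principal_left_ideal: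
  assumes f: "f \<in> carrier R"
  shows "left_ideal ((\<lambda>a. a \<otimes> f) ` carrier R) R"
  unfolding left_ideal_def
  by (intro conjI ballI additive_subgroupI add.subgroupI)
     (use f in \<open>auto simp flip: l_minus l_distr m_assoc\<close>)

lemma (in ring) principal_right_ideal:
  assumes f: "f \<in> carrier R"
  shows "right_ideal ((\<lambda>a. f \<otimes> a) ` carrier R) R"
  unfolding right_ideal_def
  by (intro conjI ballI additive_subgroupI add.subgroupI)
     (use f in \<open>auto simp flip: r_minus r_distr simp: m_assoc\<close>)

text \<open>In a left Noetherian ring every decreasing chain of idempotents q_0 >= q_1 >= ...
  (that is, q_k q_(k+1) = q_(k+1) q_k = q_(k+1)) has two equal consecutive members: the left
  ideals R (1 - q_k) increase, and 1 - q_(N+1) in R (1 - q_N) forces q_N = q_(N+1).\<close>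

lemma (in ring) left_noetherian_idempotent_chain:
  assumes LN: "left_noetherian R" and q: "\<And>k. q k \<in> carrier R"
    and idem: "\<And>k. q k \<otimes> q k = q k"
    and dec: "\<And>k. q k \<otimes> q (Suc k) = q (Suc k)" "\<And>k. q (Suc k) \<otimes> q k = q (Suc k)"
  shows "\<exists>N. q (Suc N) = q N"
proof -
  define L where "L k = (\<lambda>a. a \<otimes> (\<one> \<ominus> q k)) ` carrier R" for k
  have "L k \<subseteq> L (Suc k)" for k
  proof
    fix x assume "x \<in> L k"
    then obtain a where a: "a \<in> carrier R" "x = a \<otimes> (\<one> \<ominus> q k)" by (auto simp: L_def)
    have "(\<one> \<ominus> q k) \<otimes> (\<one> \<ominus> q (Suc k)) = \<one> \<ominus> q k"
      using q[of k] q[of "Suc k"] by (simp add: one_minus_mult dec(1), algebra)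
    then have "x = (a \<otimes> (\<one> \<ominus> q k)) \<otimes> (\<one> \<ominus> q (Suc k))"
      using a q by (simp add: m_assoc)
    then show "x \<in> L (Suc k)" using a q unfolding L_def by blast
  qed
  moreover have "left_ideal (L k) R" for k
    unfolding L_def using q by (intro principal_left_ideal) simp
  ultimately have "\<exists>N. \<forall>k\<ge>N. L k = L N"
    using LN unfolding left_noetherian_def by blast
  then obtain N where N: "L (Suc N) = L N" by (meson le_SucI order_refl)
  have "\<one> \<ominus> q (Suc N) \<in> L (Suc N)"
    using q unfolding L_def by (intro image_eqI[of _ _ \<one>]) simp_all
  then have "\<one> \<ominus> q (Suc N) \<in> L N" by (simp only: N)
  then obtain a where a: "a \<in> carrier R" "\<one> \<ominus> q (Suc N) = a \<otimes> (\<one> \<ominus> q N)"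
    unfolding L_def by blast
  have "q N \<ominus> q (Suc N) = (\<one> \<ominus> q (Suc N)) \<otimes> q N"
    using q by (simp add: one_minus_mult dec(2))
  also have "\<dots> = a \<otimes> ((\<one> \<ominus> q N) \<otimes> q N)"
    using a q by (simp add: m_assoc)
  also have "\<dots> = \<zero>"
    using a(1) q by (simp add: idempotent_complement idem)
  finally have "q N = q (Suc N)" using q minus_eq_zero_iff by simp
  then show ?thesis by (intro exI[of _ N]) simp
qed

lemma (in ring) right_noetherian_idempotent_chain:
  assumes RN: "right_noetherian R" and q: "\<And>k. q k \<in> carrier R"
    and idem: "\<And>k. q k \<otimes> q k = q k"
    and dec: "\<And>k. q k \<otimes> q (Suc k) = q (Suc k)" "\<And>k. q (Suc k) \<otimes> q k = q (Suc k)"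
  shows "\<exists>N. q (Suc N) = q N"
proof -
  define L where "L k = (\<lambda>a. (\<one> \<ominus> q k) \<otimes> a) ` carrier R" for k
  have "L k \<subseteq> L (Suc k)" for k
  proof
    fix x assume "x \<in> L k"
    then obtain a where a: "a \<in> carrier R" "x = (\<one> \<ominus> q k) \<otimes> a" by (auto simp: L_def)
    have "(\<one> \<ominus> q (Suc k)) \<otimes> (\<one> \<ominus> q k) = \<one> \<ominus> q k"
      using q[of k] q[of "Suc k"] by (simp add: one_minus_mult dec(2), algebra)
    then have "x = (\<one> \<ominus> q (Suc k)) \<otimes> ((\<one> \<ominus> q k) \<otimes> a)"
      using a q by (simp flip: m_assoc)
    then show "x \<in> L (Suc k)" using a q unfolding L_def by blast
  qed
  moreover have "right_ideal (L k) R" for k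
    unfolding L_def using q by (intro principal_right_ideal) simp
  ultimately have "\<exists>N. \<forall>k\<ge>N. L k = L N"
    using RN unfolding right_noetherian_def by blast
  then obtain N where N: "L (Suc N) = L N" by (meson le_SucI order_refl)
  have "\<one> \<ominus> q (Suc N) \<in> L (Suc N)"
    using q unfolding L_def by (intro image_eqI[of _ _ \<one>]) simp_all
  then have "\<one> \<ominus> q (Suc N) \<in> L N" by (simp only: N)
  then obtain a where a: "a \<in> carrier R" "\<one> \<ominus> q (Suc N) = (\<one> \<ominus> q N) \<otimes> a"
    unfolding L_def by blast
  have "q N \<ominus> q (Suc N) = q N \<otimes> (\<one> \<ominus> q (Suc N))"
    using q by (simp add: one_minus_mult dec(1))
  also have "\<dots> = (q N \<otimes> (\<one> \<ominus> q N)) \<otimes> a"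
    using a q by (simp add: m_assoc)
  also have "\<dots> = \<zero>"
    using a(1) q by (simp add: idempotent_complement idem)
  finally have "q N = q (Suc N)" using q minus_eq_zero_iff by simp
  then show ?thesis by (intro exI[of _ N]) simp
qed

lemma (in ring) left_ideal_imp_ideal:
  assumes "ring_commutative R" "left_ideal L R"
  shows "ideal L R"
proof (rule idealI[OF ring_axioms])
  show "subgroup L (add_monoid R)"
    using assms(2) unfolding left_ideal_def by (simp add: additive_subgroup.a_subgroup)
  show "a \<otimes> x \<in> L" "x \<otimes> a \<in> L" if "a \<in> L" "x \<in> carrier R" for a x
    using assms that additive_subgroup.a_subset[of L R]
    unfolding ring_commutative_def left_ideal_def by (auto simp: subset_iff)
qed

lemma (in ring) left_ideal_iff_right_ideal:
  assumes "ring_commutative R"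
  shows "left_ideal L R \<longleftrightarrow> right_ideal L R"
  using assms additive_subgroup.a_subset[of L R]
  unfolding ring_commutative_def left_ideal_def right_ideal_def by (auto simp: subset_iff)

lemma (in ring) left_noetherian_iff_right_noetherian:
  assumes "ring_commutative R"
  shows "left_noetherian R \<longleftrightarrow> right_noetherian R"
  unfolding left_noetherian_def right_noetherian_def left_ideal_iff_right_ideal[OF assms] ..

section \<open>Quotient rings\<close>

context ideal
begin

lemma quot_carrier: "carrier (R Quot I) = (+>) I ` carrier R"
  by (auto simp: FactRing_def A_RCOSETS_def')

lemma rcos_eq_iff:
  assumes a: "a \<in> carrier R" and b: "b \<in> carrier R"
  shows "I +> a = I +> b \<longleftrightarrow> a \<ominus> b \<in> I"
proof
  assume "I +> a = I +> b"
  then have "a \<in> I +> b" using a_repr_independenceD[OF a] by simp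
  then show "a \<ominus> b \<in> I" using a_rcos_module_minus[OF ring_axioms b a] by simp
next
  assume "a \<ominus> b \<in> I"
  then have "a \<in> I +> b" using a_rcos_module_minus[OF ring_axioms b a] by simp
  then show "I +> a = I +> b" using a_repr_independence'[OF _ b] by simp
qed

lemma quot_commutative_iff:
  "ring_commutative (R Quot I) \<longleftrightarrow> (\<forall>a\<in>carrier R. \<forall>b\<in>carrier R. a \<otimes> b \<ominus> b \<otimes> a \<in> I)"
proof -
  have "(I +> a) \<otimes>\<^bsub>R Quot I\<^esub> (I +> b) = (I +> b) \<otimes>\<^bsub>R Quot I\<^esub> (I +> a)
      \<longleftrightarrow> a \<otimes> b \<ominus> b \<otimes> a \<in> I" if "a \<in> carrier R" "b \<in> carrier R" for a b
    using that by (simp add: FactRing_def rcoset_mult_add rcos_eq_iff)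
  then show ?thesis unfolding ring_commutative_def quot_carrier by blast
qed

text \<open>If R/I is commutative, its left ideals correspond to the ideals of R containing I;
  hence R/I is left Noetherian as soon as the ascending chain condition holds for those
  ideals.\<close>

lemma quot_left_noetherian:
  assumes comm: "ring_commutative (R Quot I)"
    and acc: "\<And>D. (\<And>k. ideal (D k) R) \<Longrightarrow> (\<And>k. I \<subseteq> D k) \<Longrightarrow> (\<And>k. D k \<subseteq> D (Suc k))
      \<Longrightarrow> \<exists>N. \<forall>k\<ge>N. D k = D N"
  shows "left_noetherian (R Quot I)"
  unfolding left_noetherian_def
proof (intro allI impI)
  fix C assume "(\<forall>k. left_ideal (C k) (R Quot I)) \<and> (\<forall>k. C k \<subseteq> C (Suc k))"
  then have C: "\<And>k. ideal (C k) (R Quot I)" and C_mono: "\<And>k. C k \<subseteq> C (Suc k)"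
    using ring.left_ideal_imp_ideal[OF quotient_is_ring comm] by auto
  define D where "D k = {a \<in> carrier R. I +> a \<in> C k}" for k
  have "ideal (D k) R" for k
    unfolding D_def by (rule ring_hom_ring.ideal_vimage[OF rcos_ring_hom_ring C])
  moreover have "I \<subseteq> D k" for k
    using a_rcos_const additive_subgroup.zero_closed[OF ideal.axioms(1)[OF C]]
    by (auto simp: D_def FactRing_def)
  moreover have "D k \<subseteq> D (Suc k)" for k using C_mono by (auto simp: D_def)
  ultimately obtain N where N: "\<forall>k\<ge>N. D k = D N" using acc by blast
  have "C k = (+>) I ` D k" for k
    using additive_subgroup.a_subset[OF ideal.axioms(1)[OF C]] by (auto simp: D_def quot_carrier)
  then show "\<exists>N. \<forall>k\<ge>N. C k = C N" using N by metis
qed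

end

section \<open>Dickson's lemma\<close>

text \<open>Every sequence of natural numbers has a non-decreasing subsequence: a monotone
  subsequence exists, and a non-increasing one is eventually constant.\<close>

lemma nat_seq_incseq_subseq:
  fixes t :: "nat \<Rightarrow> nat"
  obtains f where "strict_mono f" "incseq (t \<circ> f)"
proof -
  obtain f where f: "strict_mono f" "monoseq (\<lambda>k. t (f k))" using seq_monosub by blast
  show ?thesis
  proof (cases "incseq (\<lambda>k. t (f k))")
    case True
    then show ?thesis using that f(1) by (simp add: o_def)
  next
    case False
    then have dec: "decseq (\<lambda>k. t (f k))" using f(2) by (simp add: monoseq_iff)
    obtain N where N: "\<And>k. t (f N) \<le> t (f k)"
      using ex_has_least_nat[of "\<lambda>_. True" 0 "\<lambda>k. t (f k)"] by auto
    have "t (f (k + N)) = t (f N)" for k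
      using N[of "k + N"] decseqD[OF dec, of N "k + N"] by simp
    then have "incseq (t \<circ> (f \<circ> (\<lambda>k. k + N)))" by (simp add: incseq_def)
    moreover have "strict_mono (f \<circ> (\<lambda>k. k + N))"
      using f(1) by (simp add: strict_mono_def)
    ultimately show ?thesis using that by blast
  qed
qed

lemma dickson_subseq:
  fixes s :: "nat \<Rightarrow> nat list"
  assumes "\<And>k. length (s k) = n"
  shows "\<exists>f :: nat \<Rightarrow> nat. strict_mono f \<and> (\<forall>i j. i \<le> j \<longrightarrow> list_all2 (\<le>) (s (f i)) (s (f j)))"
  using assms
proof (induction n arbitrary: s)
  case 0
  then have "s k = []" for k by simp
  then show ?case by (intro exI[of _ id]) (auto simp: strict_mono_def)
next
  case (Suc n s)
  have s: "s k = hd (s k) # tl (s k)" for k using Suc.prems[of k] by (cases "s k") auto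
  obtain f :: "nat \<Rightarrow> nat"
    where f: "strict_mono f" "\<forall>i j. i \<le> j \<longrightarrow> list_all2 (\<le>) (tl (s (f i))) (tl (s (f j)))"
    using Suc.IH[of "\<lambda>k. tl (s k)"] Suc.prems by auto
  obtain g where g: "strict_mono g" "incseq ((\<lambda>k. hd (s (f k))) \<circ> g)"
    by (rule nat_seq_incseq_subseq)
  have "list_all2 (\<le>) (s (f (g i))) (s (f (g j)))" if "i \<le> j" for i j
  proof -
    have "list_all2 (\<le>) (tl (s (f (g i)))) (tl (s (f (g j))))"
      using f(2) strict_mono_less_eq[OF g(1)] that by blast
    moreover have "hd (s (f (g i))) \<le> hd (s (f (g j)))" using g(2) that by (simp add: incseq_def)
    ultimately show ?thesis by (subst s, subst (2) s) simp
  qed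
  moreover have "strict_mono (\<lambda>k. f (g k))" using f(1) g(1) by (simp add: strict_mono_def)
  ultimately show ?case by blast
qed

lemma upward_closed_chain_stable:
  fixes U :: "nat \<Rightarrow> nat list set"
  assumes len: "\<And>k u. u \<in> U k \<Longrightarrow> length u = n"
    and up: "\<And>k u w. u \<in> U k \<Longrightarrow> list_all2 (\<le>) u w \<Longrightarrow> w \<in> U k"
    and mono: "\<And>k. U k \<subseteq> U (Suc k)"
  shows "\<exists>N. \<forall>k\<ge>N. U k = U N"
proof (rule ccontr)
  assume unstable: "\<not> (\<exists>N. \<forall>k\<ge>N. U k = U N)"
  have U_mono: "U a \<subseteq> U b" if "a \<le> b" for a b
    using lift_Suc_mono_le[of U, OF mono that] .
  have "\<exists>k' > k. \<exists>u. u \<in> U k' \<and> u \<notin> U k" for k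
  proof -
    obtain k' where "k' \<ge> k" "U k' \<noteq> U k" using unstable by blast
    then show ?thesis using U_mono[of k k'] by (auto simp: le_less)
  qed
  then obtain next_index where nxt: "\<And>k. next_index k > k \<and> (\<exists>u. u \<in> U (next_index k) \<and> u \<notin> U k)"
    by metis
  define ks where "ks j = (next_index ^^ j) 0" for j
  have ks_Suc: "ks (Suc j) = next_index (ks j)" for j by (simp add: ks_def)
  have "\<forall>j. \<exists>u. u \<in> U (ks (Suc j)) \<and> u \<notin> U (ks j)" using nxt by (simp add: ks_Suc)
  then obtain s where s: "\<And>j. s j \<in> U (ks (Suc j)) \<and> s j \<notin> U (ks j)" by metis
  have "strict_mono ks" unfolding strict_mono_Suc_iff ks_Suc using nxt by blast
  obtain f :: "nat \<Rightarrow> nat" where f: "strict_mono f" "\<forall>i j. i \<le> j \<longrightarrow> list_all2 (\<le>) (s (f i)) (s (f j))"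
    using dickson_subseq[of s n] len s by blast
  have "Suc (f 0) \<le> f 1" using f(1) by (simp add: strict_mono_def Suc_le_eq)
  then have "s (f 0) \<in> U (ks (f 1))" using s U_mono strict_mono_less_eq[OF \<open>strict_mono ks\<close>] by blast
  then have "s (f 1) \<in> U (ks (f 1))" using up f(2) by blast
  then show False using s by blast
qed

section \<open>The algebra S_n\<close>

definition empty_word :: word where
  "empty_word = (\<lambda>_. (0, 0))"

text \<open>The word with entry q in coordinate i and the empty word elsewhere; for instance
  single_word i (k, l) is x_i^k y_i^l.\<close>

definition single_word :: "nat \<Rightarrow> nat \<times> nat \<Rightarrow> word" where
  "single_word i q = empty_word(i := q)"

lemma wmul_empty_word_left [simp]: "wmul empty_word m = m"
  by (simp add: wmul_def empty_word_def bmul_def)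

lemma wmul_empty_word_right [simp]: "wmul m empty_word = m"
  by (simp add: wmul_def empty_word_def bmul_def)

lemma empty_word_in_words [simp]: "empty_word \<in> words n"
  by (simp add: words_def empty_word_def)

lemma wmul_in_words: "a \<in> words n \<Longrightarrow> b \<in> words n \<Longrightarrow> wmul a b \<in> words n"
  by (simp add: words_def wmul_def bmul_def)

lemma single_word_in_words: "i < n \<Longrightarrow> single_word i q \<in> words n"
  by (auto simp: single_word_def words_def empty_word_def)

lemma fun_upd_in_words: "m \<in> words n \<Longrightarrow> i < n \<Longrightarrow> m(i := q) \<in> words n"
  by (auto simp: words_def)

lemma Jacobson_carrier:
  "carrier (Jacobson_alg n) = {f. finite (supp f) \<and> supp f \<subseteq> words n}"
  by (simp add: Jacobson_alg_def)

lemma Jacobson_zero: "\<zero>\<^bsub>Jacobson_alg n\<^esub> = (\<lambda>_. 0)"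
  by (simp add: Jacobson_alg_def)

lemma Jacobson_one: "\<one>\<^bsub>Jacobson_alg n\<^esub> = basis_elt empty_word"
  by (simp add: Jacobson_alg_def basis_elt_def empty_word_def)

lemma Jacobson_add: "a \<oplus>\<^bsub>Jacobson_alg n\<^esub> b = (\<lambda>m. a m + b m)"
  by (simp add: Jacobson_alg_def)

lemma Jacobson_mult: "a \<otimes>\<^bsub>Jacobson_alg n\<^esub> b =
   (\<lambda>m. \<Sum>p\<in>{p \<in> supp a \<times> supp b. wmul (fst p) (snd p) = m}. a (fst p) * b (snd p))"
  by (simp add: Jacobson_alg_def)

lemma supp_basis_elt [simp]: "supp (basis_elt m :: word \<Rightarrow> 'a::field) = {m}"
  by (auto simp: supp_def basis_elt_def)

lemma basis_elt_carrier:
  "m \<in> words n \<Longrightarrow> (basis_elt m :: word \<Rightarrow> 'a::field) \<in> carrier (Jacobson_alg n)"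
  by (simp add: Jacobson_carrier)

lemma smult_carrier:
  "f \<in> carrier (Jacobson_alg n) \<Longrightarrow> (\<lambda>m. c * f m) \<in> carrier (Jacobson_alg n)"
  by (auto simp: Jacobson_carrier supp_def intro: finite_subset)

lemma basis_elt_mult:
  "basis_elt a \<otimes>\<^bsub>Jacobson_alg n\<^esub> basis_elt b = (basis_elt (wmul a b) :: word \<Rightarrow> 'a::field)"
proof
  fix m
  have pairs: "{p \<in> {a} \<times> {b}. wmul (fst p) (snd p) = m} = (if wmul a b = m then {(a, b)} else {})"
    by auto
  show "(basis_elt a \<otimes>\<^bsub>Jacobson_alg n\<^esub> basis_elt b) m = (basis_elt (wmul a b) m :: 'a)"
    unfolding Jacobson_mult supp_basis_elt by (simp only: pairs) (simp add: basis_elt_def)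
qed

lemma supp_mult_subset:
  "supp (a \<otimes>\<^bsub>Jacobson_alg n\<^esub> b) \<subseteq> {wmul x y | x y. x \<in> supp a \<and> y \<in> supp b}"
proof
  fix m assume m: "m \<in> supp (a \<otimes>\<^bsub>Jacobson_alg n\<^esub> b)"
  have "{p \<in> supp a \<times> supp b. wmul (fst p) (snd p) = m} \<noteq> {}"
  proof
    assume "{p \<in> supp a \<times> supp b. wmul (fst p) (snd p) = m} = {}"
    then have "(a \<otimes>\<^bsub>Jacobson_alg n\<^esub> b) m = 0"
      unfolding Jacobson_mult by (simp only: sum.empty)
    with m show False by (simp add: supp_def)
  qed
  then show "m \<in> {wmul x y | x y. x \<in> supp a \<and> y \<in> supp b}" by auto
qed

definition scalar :: "'a::field \<Rightarrow> word \<Rightarrow> 'a" where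
  "scalar c = (\<lambda>m. if m = empty_word then c else 0)"

lemma scalar_carrier: "scalar c \<in> carrier (Jacobson_alg n)"
proof -
  have "supp (scalar c) \<subseteq> {empty_word}" by (auto simp: supp_def scalar_def)
  then show ?thesis by (auto simp: Jacobson_carrier intro: finite_subset)
qed

lemma scalar_mult:
  "scalar c \<otimes>\<^bsub>Jacobson_alg n\<^esub> f = (\<lambda>m. c * f m)"
  "f \<otimes>\<^bsub>Jacobson_alg n\<^esub> scalar c = (\<lambda>m. c * f m)"
proof -
  have "{p \<in> supp (scalar c) \<times> supp f. wmul (fst p) (snd p) = m} =
      (if c \<noteq> 0 \<and> m \<in> supp f then {(empty_word, m)} else {})"
    "{p \<in> supp f \<times> supp (scalar c). wmul (fst p) (snd p) = m} =
      (if c \<noteq> 0 \<and> m \<in> supp f then {(m, empty_word)} else {})" for m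
    by (auto simp: supp_def scalar_def)
  then show "scalar c \<otimes>\<^bsub>Jacobson_alg n\<^esub> f = (\<lambda>m. c * f m)"
    "f \<otimes>\<^bsub>Jacobson_alg n\<^esub> scalar c = (\<lambda>m. c * f m)"
    by (auto simp: Jacobson_mult fun_eq_iff scalar_def supp_def mult.commute)
qed

lemma K_span_add: "f \<in> K_span G \<Longrightarrow> g \<in> K_span G \<Longrightarrow> (\<lambda>m. f m + g m) \<in> K_span G"
proof (induction f rule: K_span.induct)
  case (step h s c)
  then have "(\<lambda>m. c * h m + (s m + g m)) \<in> K_span G" by (intro K_span.step) auto
  then show ?case by (simp add: add.assoc)
qed simp

lemma K_span_smult: "f \<in> K_span G \<Longrightarrow> (\<lambda>m. d * f m) \<in> K_span G"
proof (induction f rule: K_span.induct)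
  case (step h s c)
  then have "(\<lambda>m. (d * c) * h m + d * s m) \<in> K_span G" by (intro K_span.step) auto
  then show ?case by (simp add: algebra_simps)
qed (simp add: K_span.zero)

lemma K_span_diff: "f \<in> K_span G \<Longrightarrow> g \<in> K_span G \<Longrightarrow> (\<lambda>m. f m - g m) \<in> K_span G"
  using K_span_add[of f G "\<lambda>m. (-1) * g m"] K_span_smult[of g G "-1"] by simp

lemma K_span_gen: "g \<in> G \<Longrightarrow> g \<in> K_span G"
  using K_span.step[OF _ K_span.zero, of g G 1] by simp

lemma K_span_least:
  assumes "(\<lambda>_. 0) \<in> S" "\<And>g s c. g \<in> G \<Longrightarrow> s \<in> S \<Longrightarrow> (\<lambda>m. c * g m + s m) \<in> S"
  shows "K_span G \<subseteq> S"
proof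
  fix f assume "f \<in> K_span G"
  then show "f \<in> S" by (induction f rule: K_span.induct) (auto intro: assms)
qed

lemma carrier_in_K_span:
  assumes "f \<in> carrier (Jacobson_alg n)"
  shows "f \<in> K_span {basis_elt m | m. m \<in> words n}"
proof -
  have "f \<in> K_span {basis_elt m | m. m \<in> words n}"
    if "finite S" "supp f = S" "S \<subseteq> words n" for S and f :: "word \<Rightarrow> 'a"
    using that
  proof (induction S arbitrary: f rule: finite_induct)
    case empty
    then have "f = (\<lambda>_. 0)" by (auto simp: supp_def)
    then show ?case using K_span.zero by simp
  next
    case (insert x F f)
    have "supp (f(x := 0)) = F" using insert by (auto simp: supp_def)
    then have "f(x := 0) \<in> K_span {basis_elt m | m. m \<in> words n}" using insert by auto
    moreover have "basis_elt x \<in> {basis_elt m | m. m \<in> words n}" using insert by auto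
    ultimately have "(\<lambda>m. f x * basis_elt x m + (f(x := 0)) m) \<in> K_span {basis_elt m | m. m \<in> words n}"
      by (intro K_span.step)
    moreover have "(\<lambda>m. f x * basis_elt x m + (f(x := 0)) m) = f"
      by (auto simp: basis_elt_def)
    ultimately show ?case by simp
  qed
  then show ?thesis using assms by (auto simp: Jacobson_carrier)
qed

text \<open>Cancelling x_i y_i as often as possible turns x_i^k y_i^l into
  x_i^(k - min k l) y_i^(l - min k l); modulo a_n every basis word equals its normal form.\<close>

definition cancel_pair :: "nat \<times> nat \<Rightarrow> nat \<times> nat" where
  "cancel_pair q = (fst q - min (fst q) (snd q), snd q - min (fst q) (snd q))"

definition normal_form :: "word \<Rightarrow> word" where
  "normal_form u = (\<lambda>i. cancel_pair (u i))"

lemma cancel_pair_eq: "fst p + snd q = fst q + snd p \<Longrightarrow> cancel_pair p = cancel_pair q"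
  by (cases p, cases q) (auto simp: cancel_pair_def min_def)

text \<open>The difference k - l of the exponents of x_i^k y_i^l is additive under bmul, so u w and
  w u have the same normal form.\<close>

lemma normal_form_wmul_commute: "normal_form (wmul u w) = normal_form (wmul w u)"
proof -
  have "fst (bmul p q) + snd (bmul q p) = fst (bmul q p) + snd (bmul p q)" for p q
    by (cases p, cases q) (auto simp: bmul_def min_def)
  then show ?thesis unfolding normal_form_def wmul_def by (intro ext cancel_pair_eq)
qed

lemma p_gen_in_frak_a: "i < n \<Longrightarrow> m \<in> words n \<Longrightarrow> p_gen i m \<in> frak_a n"
  unfolding frak_a_def by (rule K_span_gen) blast

lemma basis_elt_minus_normal_form:
  assumes "u \<in> words n"
  shows "(\<lambda>w. basis_elt u w - basis_elt (normal_form u) w) \<in> (frak_a n :: (word \<Rightarrow> 'a::field) set)"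
  using assms
proof (induction "\<Sum>i<n. min (fst (u i)) (snd (u i))" arbitrary: u rule: less_induct)
  case less
  show ?case
  proof (cases "\<exists>i<n. 0 < min (fst (u i)) (snd (u i))")
    case False
    have "normal_form u = u"
    proof
      fix i show "normal_form u i = u i"
        using False less.prems by (cases "i < n"; cases "u i") (auto simp: normal_form_def cancel_pair_def words_def)
    qed
    then show ?thesis using K_span.zero by (simp add: frak_a_def)
  next
    case True
    then obtain i k l where i: "i < n" and kl: "u i = (Suc k, Suc l)"
      by (metis gr0_conv_Suc min_less_iff_conj prod.collapse)
    define u' where "u' = u(i := (k, l))"
    have u': "u' \<in> words n" using less.prems i by (simp add: u'_def fun_upd_in_words)
    have "(\<Sum>i<n. min (fst (u' i)) (snd (u' i))) < (\<Sum>i<n. min (fst (u i)) (snd (u i)))"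
      by (rule sum_strict_mono_ex1) (use i kl in \<open>auto simp: u'_def\<close>)
    then have IH: "(\<lambda>w. basis_elt u' w - basis_elt (normal_form u') w) \<in> (frak_a n :: (word \<Rightarrow> 'a) set)"
      using less.hyps u' by blast
    have "u'(i := (fst (u' i) + 1, snd (u' i) + 1)) = u" using kl by (auto simp: u'_def)
    then have "(p_gen i u' :: word \<Rightarrow> 'a) = (\<lambda>w. basis_elt u' w - basis_elt u w)"
      unfolding p_gen_def by simp
    moreover have "(p_gen i u' :: word \<Rightarrow> 'a) \<in> frak_a n" by (rule p_gen_in_frak_a[OF i u'])
    ultimately have gen: "(\<lambda>w. basis_elt u' w - basis_elt u w) \<in> (frak_a n :: (word \<Rightarrow> 'a) set)"
      by simp
    have "normal_form u' = normal_form u"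
      unfolding normal_form_def u'_def using kl by (auto simp: cancel_pair_def)
    then show ?thesis
      using K_span_diff[OF IH[unfolded frak_a_def] gen[unfolded frak_a_def]] by (simp add: frak_a_def)
  qed
qed

lemma basis_elt_diff_in_frak_a:
  assumes "u \<in> words n" "w \<in> words n" "normal_form u = normal_form w"
  shows "(\<lambda>x. basis_elt u x - basis_elt w x) \<in> (frak_a n :: (word \<Rightarrow> 'a::field) set)"
  using K_span_diff[OF basis_elt_minus_normal_form[OF assms(1), unfolded frak_a_def]
      basis_elt_minus_normal_form[OF assms(2), unfolded frak_a_def]]
  unfolding frak_a_def assms(3) by simp

definition idem :: "nat \<Rightarrow> nat \<Rightarrow> word \<Rightarrow> 'a::field" where
  "idem i k = basis_elt (single_word i (k, k))"

lemma idem_carrier: "i < n \<Longrightarrow> idem i k \<in> carrier (Jacobson_alg n)"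
  unfolding idem_def by (intro basis_elt_carrier single_word_in_words)

lemma idem_mult: "idem i k \<otimes>\<^bsub>Jacobson_alg n\<^esub> idem i l = (idem i (max k l) :: word \<Rightarrow> 'a::field)"
proof -
  have "wmul (single_word i (k, k)) (single_word i (l, l)) = single_word i (max k l, max k l)"
    by (auto simp: wmul_def single_word_def empty_word_def bmul_def max_def)
  then show ?thesis by (simp add: idem_def basis_elt_mult)
qed

lemma idem_commutator:
  "basis_elt (single_word i (0, Suc 0)) \<otimes>\<^bsub>Jacobson_alg n\<^esub> basis_elt (single_word i (Suc 0, 0))
     = idem i 0"
  "basis_elt (single_word i (Suc 0, 0)) \<otimes>\<^bsub>Jacobson_alg n\<^esub> basis_elt (single_word i (0, Suc 0))
     = (idem i (Suc 0) :: word \<Rightarrow> 'a::field)"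
proof -
  have "wmul (single_word i (0, Suc 0)) (single_word i (Suc 0, 0)) = single_word i (0, 0)"
    "wmul (single_word i (Suc 0, 0)) (single_word i (0, Suc 0)) = single_word i (Suc 0, Suc 0)"
    by (auto simp: wmul_def single_word_def empty_word_def bmul_def)
  then show "basis_elt (single_word i (0, Suc 0)) \<otimes>\<^bsub>Jacobson_alg n\<^esub>
      basis_elt (single_word i (Suc 0, 0)) = idem i 0"
    "basis_elt (single_word i (Suc 0, 0)) \<otimes>\<^bsub>Jacobson_alg n\<^esub>
      basis_elt (single_word i (0, Suc 0)) = (idem i (Suc 0) :: word \<Rightarrow> 'a::field)"
    by (simp_all add: idem_def basis_elt_mult)
qed

text \<open>Every generator of p_i is a two-sided multiple of each difference
  x_i^k y_i^k - x_i^(k+1) y_i^(k+1): if m_i = x_i^s y_i^t, then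
  (m with m_i = x_i^s y_i^k) (x_i^k y_i^k - x_i^(k+1) y_i^(k+1)) x_i^k y_i^t = p_gen i m.\<close>

lemma p_gen_from_idem_gap:
  assumes i: "i < n" and m: "m \<in> words n"
  obtains u v where "u \<in> words n" "v \<in> words n"
    "\<And>x. p_gen i m x = ((basis_elt u \<otimes>\<^bsub>Jacobson_alg n\<^esub> idem i k) \<otimes>\<^bsub>Jacobson_alg n\<^esub> basis_elt v) x
       - ((basis_elt u \<otimes>\<^bsub>Jacobson_alg n\<^esub> idem i (Suc k)) \<otimes>\<^bsub>Jacobson_alg n\<^esub> basis_elt v) x"
proof -
  obtain s t where st: "m i = (s, t)" by force
  define u where "u = m(i := (s, k))"
  define v where "v = single_word i (k, t)"
  have "wmul (wmul u (single_word i (k, k))) v = m"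
    "wmul (wmul u (single_word i (Suc k, Suc k))) v = m(i := (fst (m i) + 1, snd (m i) + 1))"
    by (auto simp: wmul_def single_word_def empty_word_def bmul_def u_def v_def st)
  then have "p_gen i m x = ((basis_elt u \<otimes>\<^bsub>Jacobson_alg n\<^esub> idem i k) \<otimes>\<^bsub>Jacobson_alg n\<^esub> basis_elt v) x
       - ((basis_elt u \<otimes>\<^bsub>Jacobson_alg n\<^esub> idem i (Suc k)) \<otimes>\<^bsub>Jacobson_alg n\<^esub> basis_elt v) x" for x
    by (simp add: p_gen_def idem_def basis_elt_mult)
  moreover have "u \<in> words n" "v \<in> words n"
    using m i by (simp_all add: u_def v_def fun_upd_in_words single_word_in_words)
  ultimately show ?thesis using that by blast
qed

text \<open>Words without y's correspond to monomials x^e of the commutative polynomial ring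
  K[x_1, ..., x_n]; expo records the exponent vector e, as a list of length n.\<close>

definition xwords :: "nat \<Rightarrow> word set" where
  "xwords n = {m \<in> words n. \<forall>i. snd (m i) = 0}"

definition expo :: "nat \<Rightarrow> word \<Rightarrow> nat list" where
  "expo n m = map (\<lambda>i. fst (m i)) [0..<n]"

definition xpolys :: "nat \<Rightarrow> (word \<Rightarrow> 'a::field) set" where
  "xpolys n = {f \<in> carrier (Jacobson_alg n). supp f \<subseteq> xwords n}"

text \<open>The leading exponent of a polynomial, for the length-lexicographic order on nat lists
  (a well-order compatible with addition of exponent vectors).\<close>

definition lead :: "nat \<Rightarrow> (word \<Rightarrow> 'a::zero) \<Rightarrow> nat list" where
  "lead n f = Max (expo n ` supp f)"

lemma length_expo [simp]: "length (expo n m) = n"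
  by (simp add: expo_def)

lemma xwords_in_words: "v \<in> xwords n \<Longrightarrow> v \<in> words n"
  by (simp add: xwords_def)

lemma expo_inj: "a \<in> xwords n \<Longrightarrow> b \<in> xwords n \<Longrightarrow> expo n a = expo n b \<Longrightarrow> a = b"
proof
  fix i assume a: "a \<in> xwords n" and b: "b \<in> xwords n" and e: "expo n a = expo n b"
  show "a i = b i"
  proof (cases "i < n")
    case True
    then have "fst (a i) = fst (b i)" using arg_cong[OF e, of "\<lambda>xs. xs ! i"] by (simp add: expo_def)
    then show ?thesis using a b by (simp add: xwords_def prod_eq_iff)
  next
    case False
    then show ?thesis using a b by (simp add: xwords_def words_def)
  qed
qed

lemma wmul_xwords: "a \<in> xwords n \<Longrightarrow> v \<in> xwords n \<Longrightarrow> wmul a v = (\<lambda>i. (fst (a i) + fst (v i), 0))"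
  by (simp add: xwords_def wmul_def bmul_def prod_eq_iff)

lemma wmul_in_xwords: "a \<in> xwords n \<Longrightarrow> v \<in> xwords n \<Longrightarrow> wmul a v \<in> xwords n"
  by (simp add: wmul_xwords) (simp add: xwords_def words_def)

lemma expo_wmul:
  "a \<in> xwords n \<Longrightarrow> v \<in> xwords n \<Longrightarrow> expo n (wmul a v) = map2 (+) (expo n a) (expo n v)"
  by (rule nth_equalityI) (simp_all add: wmul_xwords expo_def)

lemma wmul_xwords_cancel:
  "a \<in> xwords n \<Longrightarrow> b \<in> xwords n \<Longrightarrow> v \<in> xwords n \<Longrightarrow> wmul a v = wmul b v \<Longrightarrow> a = b"
  by (rule expo_inj) (auto simp: expo_def wmul_xwords fun_eq_iff)

lemma map2_add_less:
  fixes xs ys zs :: "nat list"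
  shows "length xs = length ys \<Longrightarrow> length ys = length zs \<Longrightarrow> xs < ys \<Longrightarrow> map2 (+) xs zs < map2 (+) ys zs"
  by (induction xs ys zs rule: list_induct3) (auto simp: Cons_less_Cons)

lemma map2_add_le:
  fixes xs ys zs :: "nat list"
  shows "length xs = length ys \<Longrightarrow> length ys = length zs \<Longrightarrow> xs \<le> ys \<Longrightarrow> map2 (+) xs zs \<le> map2 (+) ys zs"
  using map2_add_less[of xs ys zs] by (auto simp: order.order_iff_strict)

lemma lead_attained: "finite (supp f) \<Longrightarrow> supp f \<noteq> {} \<Longrightarrow> \<exists>a\<in>supp f. expo n a = lead n f"
  unfolding lead_def by (metis (mono_tags) Max_in finite_imageI image_iff image_is_empty)

lemma lead_ge: "finite (supp f) \<Longrightarrow> a \<in> supp f \<Longrightarrow> expo n a \<le> lead n f"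
  unfolding lead_def by (rule Max_ge) auto

lemma length_lead: "finite (supp f) \<Longrightarrow> supp f \<noteq> {} \<Longrightarrow> length (lead n f) = n"
  using lead_attained[of f n] by (metis length_expo)

lemma xpolys_finite: "f \<in> xpolys n \<Longrightarrow> finite (supp f)"
  by (simp add: xpolys_def Jacobson_carrier)

lemma mult_xmonomial_apply:
  assumes f: "supp f \<subseteq> xwords n" and v: "v \<in> xwords n" and a: "a \<in> xwords n"
  shows "(f \<otimes>\<^bsub>Jacobson_alg n\<^esub> basis_elt v) (wmul a v) = (f a :: 'a::field)"
proof -
  have pairs: "{p \<in> supp f \<times> {v}. wmul (fst p) (snd p) = wmul a v} =
      (if a \<in> supp f then {(a, v)} else {})"
    using wmul_xwords_cancel[OF _ a v] f by auto
  show ?thesis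
    unfolding Jacobson_mult supp_basis_elt
    by (simp only: pairs) (cases "a \<in> supp f", simp_all add: basis_elt_def supp_def)
qed

lemma supp_mult_xmonomial:
  fixes f :: "word \<Rightarrow> 'a::field"
  assumes f: "supp f \<subseteq> xwords n" and v: "v \<in> xwords n"
  shows "supp (f \<otimes>\<^bsub>Jacobson_alg n\<^esub> basis_elt v) = (\<lambda>a. wmul a v) ` supp f"
proof
  show "supp (f \<otimes>\<^bsub>Jacobson_alg n\<^esub> basis_elt v) \<subseteq> (\<lambda>a. wmul a v) ` supp f"
    using supp_mult_subset[of n f "basis_elt v"] by auto
  show "(\<lambda>a. wmul a v) ` supp f \<subseteq> supp (f \<otimes>\<^bsub>Jacobson_alg n\<^esub> basis_elt v)"
    using mult_xmonomial_apply[OF f v] f by (auto simp: supp_def)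
qed

lemma mult_xmonomial_in_xpolys:
  assumes f: "f \<in> xpolys n" and v: "v \<in> xwords n"
  shows "f \<otimes>\<^bsub>Jacobson_alg n\<^esub> basis_elt v \<in> xpolys n"
proof -
  have sf: "supp f \<subseteq> xwords n" and fin: "finite (supp f)"
    using f by (simp_all add: xpolys_def Jacobson_carrier)
  then have "finite (supp (f \<otimes>\<^bsub>Jacobson_alg n\<^esub> basis_elt v))"
    "supp (f \<otimes>\<^bsub>Jacobson_alg n\<^esub> basis_elt v) \<subseteq> xwords n"
    using wmul_in_xwords[OF _ v] by (auto simp: supp_mult_xmonomial[OF sf v])
  then show ?thesis by (auto simp: xpolys_def Jacobson_carrier dest: xwords_in_words)
qed

lemma lead_mult_xmonomial:
  assumes f: "f \<in> xpolys n" "supp f \<noteq> {}" and v: "v \<in> xwords n"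
  shows "lead n (f \<otimes>\<^bsub>Jacobson_alg n\<^esub> basis_elt v) = map2 (+) (lead n f) (expo n v)"
proof -
  have fin: "finite (supp f)" and sf: "supp f \<subseteq> xwords n" using f by (auto simp: xpolys_def Jacobson_carrier)
  have "expo n ` supp (f \<otimes>\<^bsub>Jacobson_alg n\<^esub> basis_elt v) = (\<lambda>a. map2 (+) (expo n a) (expo n v)) ` supp f"
    unfolding supp_mult_xmonomial[OF sf v] image_image using sf v expo_wmul by (auto intro!: image_cong)
  moreover have "Max ((\<lambda>a. map2 (+) (expo n a) (expo n v)) ` supp f) = map2 (+) (lead n f) (expo n v)"
  proof (rule Max_eqI)
    show "finite ((\<lambda>a. map2 (+) (expo n a) (expo n v)) ` supp f)" using fin by simp
    obtain a where "a \<in> supp f" "expo n a = lead n f" using lead_attained[OF fin f(2)] by blast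
    then show "map2 (+) (lead n f) (expo n v) \<in> (\<lambda>a. map2 (+) (expo n a) (expo n v)) ` supp f"
      by (intro image_eqI[of _ _ a]) simp_all
    show "y \<le> map2 (+) (lead n f) (expo n v)" if "y \<in> (\<lambda>a. map2 (+) (expo n a) (expo n v)) ` supp f" for y
      using that lead_ge[OF fin] length_lead[OF fin f(2)] map2_add_le by fastforce
  qed
  ultimately show ?thesis by (simp add: lead_def)
qed

definition K_subspace :: "(word \<Rightarrow> 'a::field) set \<Rightarrow> bool" where
  "K_subspace P \<longleftrightarrow> (\<lambda>_. 0) \<in> P \<and> (\<forall>f\<in>P. \<forall>g\<in>P. (\<lambda>m. f m + g m) \<in> P)
     \<and> (\<forall>f\<in>P. \<forall>c. (\<lambda>m. c * f m) \<in> P)"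

lemma K_subspace_zero: "K_subspace P \<Longrightarrow> (\<lambda>_. 0) \<in> P"
  by (simp add: K_subspace_def)

lemma K_subspace_add: "K_subspace P \<Longrightarrow> f \<in> P \<Longrightarrow> g \<in> P \<Longrightarrow> (\<lambda>m. f m + g m) \<in> P"
  by (simp add: K_subspace_def)

lemma K_subspace_smult: "K_subspace P \<Longrightarrow> f \<in> P \<Longrightarrow> (\<lambda>m. c * f m) \<in> P"
  by (simp add: K_subspace_def)

lemma K_subspace_Int: "K_subspace P \<Longrightarrow> K_subspace P' \<Longrightarrow> K_subspace (P \<inter> P')"
  by (simp add: K_subspace_def)

lemma K_subspace_xpolys: "K_subspace (xpolys n :: (word \<Rightarrow> 'a::field) set)"
  unfolding K_subspace_def xpolys_def Jacobson_carrier
proof (intro conjI ballI allI)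
  fix f g :: "word \<Rightarrow> 'a" and c :: 'a
  assume f: "f \<in> {f \<in> {f. finite (supp f) \<and> supp f \<subseteq> words n}. supp f \<subseteq> xwords n}"
    and g: "g \<in> {f \<in> {f. finite (supp f) \<and> supp f \<subseteq> words n}. supp f \<subseteq> xwords n}"
  have "supp (\<lambda>m. f m + g m) \<subseteq> supp f \<union> supp g" by (auto simp: supp_def)
  then show "(\<lambda>m. f m + g m) \<in> {f \<in> {f. finite (supp f) \<and> supp f \<subseteq> words n}. supp f \<subseteq> xwords n}"
    using f g by (auto intro: finite_subset)
  have "supp (\<lambda>m. c * f m) \<subseteq> supp f" by (auto simp: supp_def)
  then show "(\<lambda>m. c * f m) \<in> {f \<in> {f. finite (supp f) \<and> supp f \<subseteq> words n}. supp f \<subseteq> xwords n}"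
    using f by (auto intro: finite_subset)
qed (simp add: supp_def)

lemma lead_reduction:
  assumes f: "f \<in> xpolys n" "supp f \<noteq> {}" and g: "g \<in> xpolys n" "supp g \<noteq> {}"
    and eq: "lead n f = lead n g"
  obtains c :: "'a::field" where "supp (\<lambda>m. f m + c * g m) = {} \<or> lead n (\<lambda>m. f m + c * g m) < lead n f"
proof -
  obtain a where a: "a \<in> supp f" "expo n a = lead n f" using lead_attained[OF xpolys_finite[OF f(1)] f(2)] by blast
  obtain b where b: "b \<in> supp g" "expo n b = lead n g" using lead_attained[OF xpolys_finite[OF g(1)] g(2)] by blast
  have xw: "supp f \<subseteq> xwords n" "supp g \<subseteq> xwords n" using f g by (simp_all add: xpolys_def)
  have "a = b" by (rule expo_inj) (use a b eq xw in auto)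
  define c where "c = - f a / g a"
  define h where "h = (\<lambda>m. f m + c * g m)"
  have "g a \<noteq> 0" using b \<open>a = b\<close> by (simp add: supp_def)
  then have ha: "h a = 0" by (simp add: h_def c_def)
  have "lead n h < lead n f" if nz: "supp h \<noteq> {}"
  proof -
    have sh: "supp h \<subseteq> supp f \<union> supp g" by (auto simp: supp_def h_def)
    then have fin: "finite (supp h)" using xpolys_finite[OF f(1)] xpolys_finite[OF g(1)] finite_subset by blast
    obtain a' where a': "a' \<in> supp h" "expo n a' = lead n h" using lead_attained[OF fin nz] by blast
    have "expo n a' \<le> lead n f"
    proof (cases "a' \<in> supp f")
      case True
      then show ?thesis by (rule lead_ge[OF xpolys_finite[OF f(1)]])
    next
      case False
      then have "a' \<in> supp g" using a'(1) sh by blast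
      then show ?thesis unfolding eq by (rule lead_ge[OF xpolys_finite[OF g(1)]])
    qed
    moreover have "a' \<noteq> a" using a'(1) ha by (auto simp: supp_def)
    then have "expo n a' \<noteq> expo n a" using a'(1) a(1) sh xw expo_inj[of a' n a] by blast
    then have "expo n a' \<noteq> lead n f" using a(2) by simp
    ultimately show ?thesis using a'(2) by simp
  qed
  then show ?thesis using that unfolding h_def by blast
qed

lemma subspace_eq_by_leads:
  assumes P: "K_subspace P" "P \<subseteq> P'" and P': "K_subspace P'" "P' \<subseteq> xpolys n"
    and leads: "\<And>f. f \<in> P' \<Longrightarrow> supp f \<noteq> {} \<Longrightarrow> \<exists>g\<in>P. supp g \<noteq> {} \<and> lead n g = lead n f"
  shows "P' \<subseteq> P"
proof
  fix f assume "f \<in> P'"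
  then show "f \<in> P"
  proof (induction "lead n f" arbitrary: f rule: less_induct)
    case less
    show ?case
    proof (cases "supp f = {}")
      case True
      then have "f = (\<lambda>_. 0)" by (auto simp: supp_def)
      then show ?thesis using K_subspace_zero[OF P(1)] by simp
    next
      case False
      obtain g where g: "g \<in> P" "supp g \<noteq> {}" "lead n g = lead n f" using leads[OF less.prems False] by blast
      obtain c where c: "supp (\<lambda>m. f m + c * g m) = {} \<or> lead n (\<lambda>m. f m + c * g m) < lead n f"
        using lead_reduction[of f n g] less.prems False g P(2) P'(2) by auto
      have "g \<in> P'" using g(1) P(2) by blast
      then have h: "(\<lambda>m. f m + c * g m) \<in> P'"
        using K_subspace_add[OF P'(1) less.prems K_subspace_smult[OF P'(1)]] by blast
      have "(\<lambda>m. f m + c * g m) \<in> P"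
      proof (cases "supp (\<lambda>m. f m + c * g m) = {}")
        case True
        then have "(\<lambda>m. f m + c * g m) = (\<lambda>_. 0)" by (auto simp: supp_def fun_eq_iff)
        then show ?thesis using K_subspace_zero[OF P(1)] by simp
      next
        case False
        then show ?thesis using c less.hyps h by blast
      qed
      then have "(\<lambda>m. (f m + c * g m) + (- c) * g m) \<in> P"
        using K_subspace_add[OF P(1) _ K_subspace_smult[OF P(1) g(1)]] by blast
      then show ?thesis by simp
    qed
  qed
qed

text \<open>Ascending chain condition for subspaces of x-polynomials that are stable under
  multiplication by x-monomials: their sets of leading exponents are upward closed, hence
  stabilise by Dickson's lemma, and then so do the subspaces.\<close>

lemma xpolys_chain_stable:
  fixes P :: "nat \<Rightarrow> (word \<Rightarrow> 'a::field) set"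
  assumes P: "\<And>k. P k \<subseteq> xpolys n" "\<And>k. K_subspace (P k)"
    and P_mult: "\<And>k f v. f \<in> P k \<Longrightarrow> v \<in> xwords n \<Longrightarrow> f \<otimes>\<^bsub>Jacobson_alg n\<^esub> basis_elt v \<in> P k"
    and P_mono: "\<And>k. P k \<subseteq> P (Suc k)"
  shows "\<exists>N. \<forall>k\<ge>N. P k = P N"
proof -
  define U where "U k = {lead n f | f. f \<in> P k \<and> supp f \<noteq> {}}" for k
  have len: "length u = n" if "u \<in> U k" for u k
    using that P(1) length_lead[OF xpolys_finite] unfolding U_def by blast
  have up: "w \<in> U k" if u: "u \<in> U k" and uw: "list_all2 (\<le>) u w" for u w k
  proof -
    obtain f where f: "f \<in> P k" "supp f \<noteq> {}" "lead n f = u" using u unfolding U_def by blast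
    have fx: "f \<in> xpolys n" using f(1) P(1) by blast
    have lu: "length u = n" and lw: "length w = n" using len[OF u] list_all2_lengthD[OF uw] by simp_all
    define v where "v = (\<lambda>i. if i < n then (w ! i - u ! i, 0::nat) else (0, 0))"
    have v: "v \<in> xwords n" by (auto simp: xwords_def words_def v_def)
    have "map2 (+) u (expo n v) = w"
      using lu lw list_all2_nthD[OF uw] by (intro nth_equalityI) (auto simp: expo_def v_def)
    then have "lead n (f \<otimes>\<^bsub>Jacobson_alg n\<^esub> basis_elt v) = w" using lead_mult_xmonomial[OF fx f(2) v] f(3) by simp
    moreover have "supp f \<subseteq> xwords n" using fx by (simp add: xpolys_def)
    then have "supp (f \<otimes>\<^bsub>Jacobson_alg n\<^esub> basis_elt v) \<noteq> {}"
      using f(2) by (simp add: supp_mult_xmonomial[OF _ v])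
    ultimately show ?thesis using P_mult[OF f(1) v] unfolding U_def by blast
  qed
  have "U k \<subseteq> U (Suc k)" for k using P_mono unfolding U_def by blast
  then obtain N where N: "\<forall>k\<ge>N. U k = U N" using upward_closed_chain_stable[of U n] len up by blast
  have "P k = P N" if k: "k \<ge> N" for k
  proof
    show sub: "P N \<subseteq> P k" using lift_Suc_mono_le[of P, OF P_mono k] .
    have "\<exists>g\<in>P N. supp g \<noteq> {} \<and> lead n g = lead n f" if "f \<in> P k" "supp f \<noteq> {}" for f
    proof -
      have "lead n f \<in> U k" using that unfolding U_def by blast
      then have "lead n f \<in> U N" using N k by blast
      then show ?thesis unfolding U_def by auto
    qed
    then show "P k \<subseteq> P N" by (rule subspace_eq_by_leads[OF P(2) sub P(2) P(1)])
  qed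
  then show ?thesis by blast
qed

section \<open>An ideal I of S_n\<close>

locale jacobson_ideal =
  fixes n :: nat and I :: "(word \<Rightarrow> 'a::field) set"
  assumes ideal_I: "ideal I (Jacobson_alg n)"
begin

abbreviation J :: "(word \<Rightarrow> 'a) ring" where "J \<equiv> Jacobson_alg n"

lemma ring_J: "ring J"
  using ideal_I by (simp add: ideal_def)

lemma J_minus: "f \<in> carrier J \<Longrightarrow> g \<in> carrier J \<Longrightarrow> f \<ominus>\<^bsub>J\<^esub> g = (\<lambda>m. f m - g m)"
proof -
  assume f: "f \<in> carrier J" and g: "g \<in> carrier J"
  have "(\<lambda>m. - g m) \<oplus>\<^bsub>J\<^esub> g = \<zero>\<^bsub>J\<^esub>" by (simp add: Jacobson_add Jacobson_zero)
  then have "\<ominus>\<^bsub>J\<^esub> g = (\<lambda>m. - g m)"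
    using g smult_carrier[OF g, of "-1"]
    by (intro abelian_group.minus_equality[OF ring.is_abelian_group[OF ring_J]]) simp_all
  then show ?thesis by (simp add: a_minus_def Jacobson_add)
qed

lemma ideal_smult: "ideal D J \<Longrightarrow> f \<in> D \<Longrightarrow> (\<lambda>m. c * f m) \<in> D"
  using ideal.I_l_closed[of D J f "scalar c"] by (simp add: scalar_carrier scalar_mult)

lemma ideal_add: "ideal D J \<Longrightarrow> f \<in> D \<Longrightarrow> g \<in> D \<Longrightarrow> (\<lambda>m. f m + g m) \<in> D"
  using additive_subgroup.a_closed[OF ideal.axioms(1)] by (fastforce simp: Jacobson_add)

lemma ideal_zero: "ideal D J \<Longrightarrow> (\<lambda>_. 0) \<in> D"
  using additive_subgroup.zero_closed[OF ideal.axioms(1)] by (fastforce simp: Jacobson_zero)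

lemma ideal_K_span: "ideal D J \<Longrightarrow> G \<subseteq> D \<Longrightarrow> K_span G \<subseteq> D"
  by (rule K_span_least) (auto intro!: ideal_zero ideal_add ideal_smult)

lemma K_span_subset_ideal_iff: "ideal D J \<Longrightarrow> K_span G \<subseteq> D \<longleftrightarrow> G \<subseteq> D"
  by (meson K_span_gen ideal_K_span subset_iff)

lemma height_one_prime_subset_iff:
  "ideal D J \<Longrightarrow> height_one_prime n i \<subseteq> D \<longleftrightarrow> (\<forall>m\<in>words n. p_gen i m \<in> D)"
  unfolding height_one_prime_def by (simp add: K_span_subset_ideal_iff) blast

lemma frak_a_subset_iff:
  "ideal D J \<Longrightarrow> frak_a n \<subseteq> D \<longleftrightarrow> (\<forall>i<n. height_one_prime n i \<subseteq> D)"
  unfolding frak_a_def height_one_prime_def by (simp add: K_span_subset_ideal_iff) blast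

lemma idem_gap_imp_height_one_prime:
  assumes D: "ideal D J" and i: "i < n" and gap: "idem i k \<ominus>\<^bsub>J\<^esub> idem i (Suc k) \<in> D"
  shows "height_one_prime n i \<subseteq> D"
  unfolding height_one_prime_subset_iff[OF D]
proof
  interpret ring J by (rule ring_J)
  fix m assume m: "m \<in> words n"
  obtain u v where u: "u \<in> words n" and v: "v \<in> words n" and p: "\<And>x. p_gen i m x =
      ((basis_elt u \<otimes>\<^bsub>J\<^esub> idem i k) \<otimes>\<^bsub>J\<^esub> basis_elt v) x
       - ((basis_elt u \<otimes>\<^bsub>J\<^esub> idem i (Suc k)) \<otimes>\<^bsub>J\<^esub> basis_elt v) x"
    using p_gen_from_idem_gap[OF i m] by blast
  have eu: "basis_elt u \<in> carrier J" and ev: "basis_elt v \<in> carrier J"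
    and ei: "\<And>k. idem i k \<in> carrier J"
    using u v i by (simp_all add: basis_elt_carrier idem_carrier)
  have "basis_elt u \<otimes>\<^bsub>J\<^esub> (idem i k \<ominus>\<^bsub>J\<^esub> idem i (Suc k)) \<otimes>\<^bsub>J\<^esub> basis_elt v \<in> D"
    using gap eu ev ideal.I_l_closed[OF D] ideal.I_r_closed[OF D] by blast
  also have "basis_elt u \<otimes>\<^bsub>J\<^esub> (idem i k \<ominus>\<^bsub>J\<^esub> idem i (Suc k)) \<otimes>\<^bsub>J\<^esub> basis_elt v =
      basis_elt u \<otimes>\<^bsub>J\<^esub> idem i k \<otimes>\<^bsub>J\<^esub> basis_elt v \<ominus>\<^bsub>J\<^esub>
      basis_elt u \<otimes>\<^bsub>J\<^esub> idem i (Suc k) \<otimes>\<^bsub>J\<^esub> basis_elt v"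
    by (rule mult_minus_mult[OF eu ei ei ev])
  also have "\<dots> = p_gen i m"
    using eu ev ei by (simp add: J_minus p fun_eq_iff)
  finally show "p_gen i m \<in> D" .
qed

text \<open>If S_n/I is commutative, then y_i x_i - x_i y_i = 1 - x_i y_i lies in I, hence so does
  every p_i.\<close>

lemma commutative_imp_frak_a:
  assumes "ring_commutative (J Quot I)"
  shows "frak_a n \<subseteq> I"
  unfolding frak_a_subset_iff[OF ideal_I]
proof (intro allI impI)
  fix i assume i: "i < n"
  let ?y = "basis_elt (single_word i (0, Suc 0)) :: word \<Rightarrow> 'a"
  let ?x = "basis_elt (single_word i (Suc 0, 0)) :: word \<Rightarrow> 'a"
  have "?y \<otimes>\<^bsub>J\<^esub> ?x \<ominus>\<^bsub>J\<^esub> ?x \<otimes>\<^bsub>J\<^esub> ?y \<in> I"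
    using assms i unfolding ideal.quot_commutative_iff[OF ideal_I]
    by (simp add: basis_elt_carrier single_word_in_words)
  then have "idem i 0 \<ominus>\<^bsub>J\<^esub> idem i (Suc 0) \<in> I" by (simp add: idem_commutator)
  then show "height_one_prime n i \<subseteq> I" by (rule idem_gap_imp_height_one_prime[OF ideal_I i])
qed

text \<open>Commutators of basis words lie in a_n, as both products have the same normal form.\<close>

lemma basis_commutator_in_frak_a:
  assumes "u \<in> words n" "w \<in> words n"
  shows "basis_elt u \<otimes>\<^bsub>J\<^esub> basis_elt w \<ominus>\<^bsub>J\<^esub> basis_elt w \<otimes>\<^bsub>J\<^esub> basis_elt u \<in> frak_a n"
  using basis_elt_diff_in_frak_a[OF wmul_in_words[OF assms] wmul_in_words[OF assms(2,1)]
      normal_form_wmul_commute]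
  by (simp add: basis_elt_mult J_minus basis_elt_carrier wmul_in_words assms)

lemma commutator_K_span:
  assumes D: "ideal D J" and a: "a \<in> carrier J"
    and G: "\<And>g. g \<in> G \<Longrightarrow> g \<in> carrier J \<and> a \<otimes>\<^bsub>J\<^esub> g \<ominus>\<^bsub>J\<^esub> g \<otimes>\<^bsub>J\<^esub> a \<in> D"
    and b: "b \<in> K_span G"
  shows "b \<in> carrier J \<and> a \<otimes>\<^bsub>J\<^esub> b \<ominus>\<^bsub>J\<^esub> b \<otimes>\<^bsub>J\<^esub> a \<in> D"
  using b
proof (induction b rule: K_span.induct)
  case zero
  interpret ring J by (rule ring_J)
  have "a \<otimes>\<^bsub>J\<^esub> \<zero>\<^bsub>J\<^esub> \<ominus>\<^bsub>J\<^esub> \<zero>\<^bsub>J\<^esub> \<otimes>\<^bsub>J\<^esub> a = \<zero>\<^bsub>J\<^esub>" using a by algebra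
  then show ?case
    using additive_subgroup.zero_closed[OF ideal.axioms(1)[OF D]]
    by (simp add: Jacobson_zero Jacobson_carrier supp_def)
next
  case (step g s c)
  interpret ring J by (rule ring_J)
  have g: "g \<in> carrier J" and s: "s \<in> carrier J" using G step by auto
  have sc: "scalar c \<in> carrier J" by (rule scalar_carrier)
  have central: "a \<otimes>\<^bsub>J\<^esub> scalar c = scalar c \<otimes>\<^bsub>J\<^esub> a" by (simp add: scalar_mult)
  have "a \<otimes>\<^bsub>J\<^esub> g \<ominus>\<^bsub>J\<^esub> g \<otimes>\<^bsub>J\<^esub> a \<in> D" "a \<otimes>\<^bsub>J\<^esub> s \<ominus>\<^bsub>J\<^esub> s \<otimes>\<^bsub>J\<^esub> a \<in> D"
    using G step by auto
  then have "scalar c \<otimes>\<^bsub>J\<^esub> (a \<otimes>\<^bsub>J\<^esub> g \<ominus>\<^bsub>J\<^esub> g \<otimes>\<^bsub>J\<^esub> a) \<oplus>\<^bsub>J\<^esub>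
      (a \<otimes>\<^bsub>J\<^esub> s \<ominus>\<^bsub>J\<^esub> s \<otimes>\<^bsub>J\<^esub> a) \<in> D"
    using ideal.I_l_closed[OF D _ sc] additive_subgroup.a_closed[OF ideal.axioms(1)[OF D]] by blast
  then have "a \<otimes>\<^bsub>J\<^esub> (scalar c \<otimes>\<^bsub>J\<^esub> g \<oplus>\<^bsub>J\<^esub> s) \<ominus>\<^bsub>J\<^esub> (scalar c \<otimes>\<^bsub>J\<^esub> g \<oplus>\<^bsub>J\<^esub> s) \<otimes>\<^bsub>J\<^esub> a \<in> D"
    by (simp only: commutator_step[OF a sc g s central])
  moreover have "(\<lambda>m. c * g m + s m) = scalar c \<otimes>\<^bsub>J\<^esub> g \<oplus>\<^bsub>J\<^esub> s"
    by (simp add: Jacobson_add scalar_mult)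
  ultimately show ?case using sc g s by simp
qed

text \<open>(4) implies (3): commutators of basis words lie in a_n, and by bilinearity (applied in
  each argument) so do all commutators.\<close>

lemma frak_a_imp_commutative:
  assumes frak: "frak_a n \<subseteq> I"
  shows "ring_commutative (J Quot I)"
proof -
  interpret ring J by (rule ring_J)
  let ?B = "{basis_elt m | m. m \<in> words n} :: (word \<Rightarrow> 'a) set"
  have swap: "b \<otimes>\<^bsub>J\<^esub> a \<ominus>\<^bsub>J\<^esub> a \<otimes>\<^bsub>J\<^esub> b \<in> I"
    if "a \<in> carrier J" "b \<in> carrier J" "a \<otimes>\<^bsub>J\<^esub> b \<ominus>\<^bsub>J\<^esub> b \<otimes>\<^bsub>J\<^esub> a \<in> I" for a b
    using that additive_subgroup.a_inv_closed[OF ideal.axioms(1)[OF ideal_I]] minus_swap by force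
  have basis: "g \<in> carrier J \<and> a \<otimes>\<^bsub>J\<^esub> g \<ominus>\<^bsub>J\<^esub> g \<otimes>\<^bsub>J\<^esub> a \<in> I" if "a \<in> ?B" "g \<in> ?B" for a g
    using that basis_commutator_in_frak_a frak basis_elt_carrier by blast
  have basis_left: "a \<otimes>\<^bsub>J\<^esub> b \<ominus>\<^bsub>J\<^esub> b \<otimes>\<^bsub>J\<^esub> a \<in> I" if a: "a \<in> ?B" and b: "b \<in> carrier J" for a b
  proof -
    have "a \<in> carrier J" using a basis_elt_carrier by blast
    then show ?thesis
      using commutator_K_span[OF ideal_I _ basis[OF a] carrier_in_K_span[OF b]] by blast
  qed
  have "a \<otimes>\<^bsub>J\<^esub> b \<ominus>\<^bsub>J\<^esub> b \<otimes>\<^bsub>J\<^esub> a \<in> I" if a: "a \<in> carrier J" and b: "b \<in> carrier J" for a b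
  proof -
    have "g \<in> carrier J \<and> b \<otimes>\<^bsub>J\<^esub> g \<ominus>\<^bsub>J\<^esub> g \<otimes>\<^bsub>J\<^esub> b \<in> I" if "g \<in> ?B" for g
      using that b basis_left[OF that b] swap basis_elt_carrier by blast
    then have "b \<otimes>\<^bsub>J\<^esub> a \<ominus>\<^bsub>J\<^esub> a \<otimes>\<^bsub>J\<^esub> b \<in> I"
      using commutator_K_span[OF ideal_I b _ carrier_in_K_span[OF a]] by blast
    then show ?thesis using swap a b by blast
  qed
  then show ?thesis unfolding ideal.quot_commutative_iff[OF ideal_I] by blast
qed

text \<open>The images of x_i^k y_i^k in S_n/I form a decreasing chain of idempotents; if S_n/I
  is left or right Noetherian two consecutive ones coincide, and then I contains p_i.\<close>

lemma noetherian_imp_frak_a: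
  assumes "left_noetherian (J Quot I) \<or> right_noetherian (J Quot I)"
  shows "frak_a n \<subseteq> I"
  unfolding frak_a_subset_iff[OF ideal_I]
proof (intro allI impI)
  fix i assume i: "i < n"
  interpret Q: ring "J Quot I" by (rule ideal.quotient_is_ring[OF ideal_I])
  have hom: "(+>\<^bsub>J\<^esub>) I \<in> ring_hom J (J Quot I)" by (rule ideal.rcos_ring_hom[OF ideal_I])
  have ei: "\<And>k. idem i k \<in> carrier J" using i by (simp add: idem_carrier)
  define q where "q k = I +>\<^bsub>J\<^esub> idem i k" for k
  have q: "q k \<in> carrier (J Quot I)" for k
    unfolding q_def by (rule ring_hom_closed[OF hom ei])
  have q_mult: "q k \<otimes>\<^bsub>J Quot I\<^esub> q l = q (max k l)" for k l
    unfolding q_def ring_hom_mult[OF hom ei ei, symmetric] by (simp add: idem_mult)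
  have chain: "q k \<otimes>\<^bsub>J Quot I\<^esub> q k = q k" "q k \<otimes>\<^bsub>J Quot I\<^esub> q (Suc k) = q (Suc k)"
    "q (Suc k) \<otimes>\<^bsub>J Quot I\<^esub> q k = q (Suc k)" for k
    by (simp_all add: q_mult max_def)
  obtain N where "q (Suc N) = q N"
    using assms Q.left_noetherian_idempotent_chain[of q] Q.right_noetherian_idempotent_chain[of q]
      q chain by blast
  then have "idem i N \<ominus>\<^bsub>J\<^esub> idem i (Suc N) \<in> I"
    unfolding q_def using ideal.rcos_eq_iff[OF ideal_I ei ei] by metis
  then show "height_one_prime n i \<subseteq> I" by (rule idem_gap_imp_height_one_prime[OF ideal_I i])
qed

lemma ideal_K_subspace: "ideal D J \<Longrightarrow> K_subspace D"
  by (simp add: K_subspace_def ideal_zero ideal_add ideal_smult)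

text \<open>Modulo a_n every element a of S_n is (a x^v) y^v for a suitable x-monomial x^v making
  a x^v a polynomial in the x_i: take v with all entries at least the y-degree of a.\<close>

lemma x_lift:
  assumes a: "a \<in> carrier J"
  obtains v y where "v \<in> xwords n" "y \<in> words n" "a \<otimes>\<^bsub>J\<^esub> basis_elt v \<in> xpolys n"
    "\<one>\<^bsub>J\<^esub> \<ominus>\<^bsub>J\<^esub> basis_elt v \<otimes>\<^bsub>J\<^esub> basis_elt y \<in> frak_a n"
proof -
  interpret ring J by (rule ring_J)
  have fin: "finite (supp a)" and sw: "supp a \<subseteq> words n" using a by (auto simp: Jacobson_carrier)
  define B where "B = (\<Sum>m\<in>supp a. \<Sum>i<n. snd (m i))"
  define v :: word where "v = (\<lambda>i. if i < n then (B, 0) else (0, 0))"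
  define y :: word where "y = (\<lambda>i. if i < n then (0, B) else (0, 0))"
  have v: "v \<in> xwords n" and y: "y \<in> words n" by (simp_all add: xwords_def words_def v_def y_def)
  have ev: "basis_elt v \<in> carrier J" and ey: "basis_elt y \<in> carrier J"
    using v y by (simp_all add: basis_elt_carrier xwords_in_words)
  have B: "snd (m i) \<le> B" if "m \<in> supp a" "i < n" for m i
  proof -
    have "snd (m i) \<le> (\<Sum>i<n. snd (m i))" using that(2) by (intro member_le_sum) auto
    also have "\<dots> \<le> B" unfolding B_def using that(1) fin by (intro member_le_sum) auto
    finally show ?thesis .
  qed
  have "supp (a \<otimes>\<^bsub>J\<^esub> basis_elt v) \<subseteq> xwords n"
  proof
    fix w assume "w \<in> supp (a \<otimes>\<^bsub>J\<^esub> basis_elt v)"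
    then obtain m where m: "m \<in> supp a" "w = wmul m v" using supp_mult_subset[of n a "basis_elt v"] by auto
    then have "m \<in> words n" using sw by blast
    then have "snd (w i) = 0" for i
      using B[OF m(1), of i] by (cases "i < n") (auto simp: m(2) wmul_def bmul_def v_def words_def)
    then show "w \<in> xwords n"
      using wmul_in_words[OF \<open>m \<in> words n\<close> xwords_in_words[OF v]] m(2) by (simp add: xwords_def)
  qed
  then have "a \<otimes>\<^bsub>J\<^esub> basis_elt v \<in> xpolys n" using a ev by (simp add: xpolys_def)
  moreover have "normal_form empty_word = normal_form (wmul v y)"
    by (auto simp: normal_form_def cancel_pair_def empty_word_def wmul_def bmul_def v_def y_def)
  then have "\<one>\<^bsub>J\<^esub> \<ominus>\<^bsub>J\<^esub> basis_elt v \<otimes>\<^bsub>J\<^esub> basis_elt y \<in> frak_a n"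
    using basis_elt_diff_in_frak_a[OF empty_word_in_words wmul_in_words[OF xwords_in_words[OF v] y]]
    by (simp add: Jacobson_one basis_elt_mult J_minus basis_elt_carrier wmul_in_words
        xwords_in_words[OF v] y)
  ultimately show ?thesis using that v y by blast
qed

text \<open>An ideal containing a_n is determined by its x-part: if D' contains a_n and the
  x-part of D, then D <= D', since a = a (1 - x^v y^v) + (a x^v) y^v with 1 - x^v y^v in a_n.\<close>

lemma ideal_subset_by_xpart:
  assumes D: "ideal D J" and D': "ideal D' J" and frak: "frak_a n \<subseteq> D'"
    and xpart: "D \<inter> xpolys n \<subseteq> D'"
  shows "D \<subseteq> D'"
proof
  interpret ring J by (rule ring_J)
  fix a assume aD: "a \<in> D"
  have ac: "a \<in> carrier J" using aD ideal.Icarr[OF D] by blast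
  obtain v y where v: "v \<in> xwords n" and y: "y \<in> words n"
    and ax: "a \<otimes>\<^bsub>J\<^esub> basis_elt v \<in> xpolys n"
    and one_minus: "\<one>\<^bsub>J\<^esub> \<ominus>\<^bsub>J\<^esub> basis_elt v \<otimes>\<^bsub>J\<^esub> basis_elt y \<in> frak_a n"
    by (rule x_lift[OF ac])
  have ev: "basis_elt v \<in> carrier J" and ey: "basis_elt y \<in> carrier J"
    using v y by (simp_all add: basis_elt_carrier xwords_in_words)
  have "a \<otimes>\<^bsub>J\<^esub> basis_elt v \<in> D'" using ideal.I_r_closed[OF D aD ev] ax xpart by blast
  then have x_part: "(a \<otimes>\<^bsub>J\<^esub> basis_elt v) \<otimes>\<^bsub>J\<^esub> basis_elt y \<in> D'"
    by (rule ideal.I_r_closed[OF D' _ ey])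
  have rest: "a \<otimes>\<^bsub>J\<^esub> (\<one>\<^bsub>J\<^esub> \<ominus>\<^bsub>J\<^esub> basis_elt v \<otimes>\<^bsub>J\<^esub> basis_elt y) \<in> D'"
    using one_minus frak by (intro ideal.I_l_closed[OF D' _ ac]) blast
  have "a \<otimes>\<^bsub>J\<^esub> (\<one>\<^bsub>J\<^esub> \<ominus>\<^bsub>J\<^esub> basis_elt v \<otimes>\<^bsub>J\<^esub> basis_elt y) \<oplus>\<^bsub>J\<^esub>
      (a \<otimes>\<^bsub>J\<^esub> basis_elt v) \<otimes>\<^bsub>J\<^esub> basis_elt y \<in> D'"
    by (rule additive_subgroup.a_closed[OF ideal.axioms(1)[OF D'] rest x_part])
  then show "a \<in> D'" using split_by_product[OF ac ev ey] by simp
qed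

text \<open>Ascending chain condition for ideals of S_n containing a_n: their x-parts stabilise by
  the chain condition for monomial-stable subspaces, and they determine the ideals.\<close>

lemma ideal_chain_stable:
  assumes D: "\<And>k. ideal (D k) J" and frak: "\<And>k. frak_a n \<subseteq> D k"
    and mono: "\<And>k. D k \<subseteq> D (Suc k)"
  shows "\<exists>N. \<forall>k\<ge>N. D k = D N"
proof -
  define P where "P k = D k \<inter> xpolys n" for k
  have "\<exists>N. \<forall>k\<ge>N. P k = P N"
  proof (rule xpolys_chain_stable)
    show "P k \<subseteq> xpolys n" "K_subspace (P k)" "P k \<subseteq> P (Suc k)" for k
      using K_subspace_Int[OF ideal_K_subspace[OF D] K_subspace_xpolys] mono by (auto simp: P_def)
    show "f \<otimes>\<^bsub>J\<^esub> basis_elt v \<in> P k" if "f \<in> P k" "v \<in> xwords n" for f v k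
    proof -
      have "basis_elt v \<in> carrier J" using that(2) by (simp add: basis_elt_carrier xwords_in_words)
      then show ?thesis using that ideal.I_r_closed[OF D] mult_xmonomial_in_xpolys by (auto simp: P_def)
    qed
  qed
  then obtain N where N: "\<forall>k\<ge>N. P k = P N" by blast
  have "D k = D N" if k: "k \<ge> N" for k
  proof
    have "P k = P N" using N k by blast
    then show "D k \<subseteq> D N" by (intro ideal_subset_by_xpart[OF D D frak]) (simp add: P_def)
    show "D N \<subseteq> D k" using lift_Suc_mono_le[of D, OF mono k] .
  qed
  then show ?thesis by blast
qed

lemma frak_a_imp_left_noetherian:
  assumes "frak_a n \<subseteq> I"
  shows "left_noetherian (J Quot I)"
proof (rule ideal.quot_left_noetherian[OF ideal_I frak_a_imp_commutative[OF assms]])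
  fix D assume "\<And>k. ideal (D k) J" "\<And>k. I \<subseteq> D k" "\<And>k. D k \<subseteq> D (Suc k)"
  then show "\<exists>N. \<forall>k\<ge>N. D k = D N" using assms by (intro ideal_chain_stable) blast+
qed

end

theorem theorem5p1:
  fixes n :: nat and I :: "(word \<Rightarrow> 'a::field) set"
  assumes "n \<ge> 1"
    and "ideal I (Jacobson_alg n :: (word \<Rightarrow> 'a) ring)"
  shows "(left_noetherian (Jacobson_alg n Quot I) \<longleftrightarrow> right_noetherian (Jacobson_alg n Quot I))
       \<and> (right_noetherian (Jacobson_alg n Quot I) \<longleftrightarrow> ring_commutative (Jacobson_alg n Quot I))
       \<and> (ring_commutative (Jacobson_alg n Quot I) \<longleftrightarrow> frak_a n \<subseteq> I)"
proof -
  interpret jacobson_ideal n I by (rule jacobson_ideal.intro) (rule assms(2))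
  interpret Q: ring "J Quot I" by (rule ideal.quotient_is_ring[OF ideal_I])
  have comm: "ring_commutative (J Quot I) \<longleftrightarrow> frak_a n \<subseteq> I"
    using commutative_imp_frak_a frak_a_imp_commutative by blast
  have left: "left_noetherian (J Quot I) \<longleftrightarrow> frak_a n \<subseteq> I"
    using noetherian_imp_frak_a frak_a_imp_left_noetherian by blast
  have right: "right_noetherian (J Quot I) \<longleftrightarrow> frak_a n \<subseteq> I"
    using noetherian_imp_frak_a left comm Q.left_noetherian_iff_right_noetherian by blast
  show ?thesis using comm left right by blast
qed

end
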